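(* There exist infinitely many pairs $(a,b)$ of integers such that (i) $a\ge 36$ and $a$ is even, and $b\ge 21$ and $b$ is odd; (ii) $3b(b-1)=a(a-1)$; and (iii) $b\le 7a/12$. *)

theory Defs
  imports Complex_Main
begin

end

theory Submission
  imports Defs
begin

text \<open>With \<open>x = 2a - 1\<close> and \<open>y = 2b - 1\<close> the equation \<open>3b(b - 1) = a(a - 1)\<close> becomes the
  Pell-type equation \<open>x\<^sup>2 - 3y\<^sup>2 = -2\<close>, whose solutions are permuted by multiplication with the
  unit \<open>(2 + \<surd>3)\<^sup>4 = 97 + 56\<surd>3\<close>. Translated back to \<open>(a, b)\<close> this is the affine map
  \<open>pell_step\<close> below; it preserves the parity conditions and the bound \<open>12b \<le> 7a\<close>, and strictly
  increases \<open>a\<close>. Iterating it from \<open>(36, 21)\<close> therefore yields infinitely many solutions.\<close>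

lemma infinite_if_closed_under_increasing_map:
  fixes g :: "'a \<Rightarrow> 'b::linorder"
  assumes "x \<in> S"
    and closed: "\<And>x. x \<in> S \<Longrightarrow> f x \<in> S"
    and increasing: "\<And>x. x \<in> S \<Longrightarrow> g x < g (f x)"
  shows "infinite S"
proof
  assume "finite S"
  then have "Max (g ` S) \<in> g ` S"
    using \<open>x \<in> S\<close> by (intro Max_in) auto
  then obtain m where "m \<in> S" and "g m = Max (g ` S)"
    by auto
  moreover have "g (f m) \<le> Max (g ` S)"
    using \<open>finite S\<close> closed[OF \<open>m \<in> S\<close>] by simp
  ultimately show False
    using increasing[OF \<open>m \<in> S\<close>] by simp
qed

definition pell_step :: "int \<times> int \<Rightarrow> int \<times> int" where
  "pell_step = (\<lambda>(a, b). (97 * a + 168 * b - 132, 56 * a + 97 * b - 76))"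

lemma pell_step_preserves_equation:
  fixes a b :: int
  assumes "3 * b * (b - 1) = a * (a - 1)"
  shows "3 * (56 * a + 97 * b - 76) * (56 * a + 97 * b - 76 - 1)
       = (97 * a + 168 * b - 132) * (97 * a + 168 * b - 132 - 1)"
  using assms by (simp add: algebra_simps)

definition solutions :: "(int \<times> int) set" where
  "solutions = {(a, b). a \<ge> 36 \<and> even a \<and> b \<ge> 21 \<and> odd b
           \<and> 3 * b * (b - 1) = a * (a - 1)
           \<and> real_of_int b \<le> 7 * real_of_int a / 12}"

lemma mem_solutions_iff:
  "(a, b) \<in> solutions \<longleftrightarrow> a \<ge> 36 \<and> even a \<and> b \<ge> 21 \<and> odd b
           \<and> 3 * b * (b - 1) = a * (a - 1) \<and> 12 * b \<le> 7 * a"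
proof -
  have "real_of_int b \<le> 7 * real_of_int a / 12 \<longleftrightarrow> 12 * b \<le> 7 * a"
    by linarith
  then show ?thesis
    unfolding solutions_def by simp
qed

lemma pell_step_solutions:
  assumes "p \<in> solutions"
  shows "pell_step p \<in> solutions" and "fst p < fst (pell_step p)"
proof -
  obtain a b where p: "p = (a, b)"
    by fastforce
  with assms have "a \<ge> 36" "even a" "b \<ge> 21" "odd b"
    "3 * b * (b - 1) = a * (a - 1)" "12 * b \<le> 7 * a"
    by (simp_all add: mem_solutions_iff)
  then show "pell_step p \<in> solutions" and "fst p < fst (pell_step p)"
    using pell_step_preserves_equation
    by (simp_all add: p pell_step_def mem_solutions_iff)
qed

theorem lemma4p4:
  shows "infinite {(a :: int, b :: int). a \<ge> 36 \<and> even a \<and> b \<ge> 21 \<and> odd b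
           \<and> 3 * b * (b - 1) = a * (a - 1)
           \<and> real_of_int b \<le> 7 * real_of_int a / 12}"
proof -
  have "(36, 21) \<in> solutions"
    by (simp add: mem_solutions_iff)
  then have "infinite solutions"
    using pell_step_solutions
    by (rule infinite_if_closed_under_increasing_map[where g = fst])
  then show ?thesis
    by (simp add: solutions_def)
qed

end
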